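(* Let $(\Omega,\mathcal{A},\mu)$ be a finite measure space and let $(f_n)_{n\in\mathbb{N}_0}$ be a sequence of non-negative functions in $L^1(\Omega,\mathcal{A},\mu)$ for which there exists $g\in L^1(\Omega,\mathcal{A},\mu)$ with $f_n\le g$ a.e. for all $n\in\mathbb{N}_0$. Then $\frac{1}{n}\sum_{j=0}^{n-1}f_j\to 0$ as $n\to\infty$ if and only if there is a sequence of measurable sets $(A_n)_{n\in\mathbb{N}_0}$ in $\mathcal{A}$ with $\frac{1}{n}\sum_{j=0}^{n-1}\chi_{A_j}\to 0$ and $\chi_{\Omega\setminus A_n}f_n\to 0$ as $n\to\infty$. Here all the limits may be taken either a.e. pointwise or in $L^1$ norm.
   Context: $\chi_A$ denotes the characteristic (indicator) function of a set $A$. *)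

theory Defs
  imports "HOL-Analysis.Analysis"
begin

end

theory Submission
  imports Defs
begin

text \<open>Forward directions: let \<open>s\<^sub>n\<close> be the Cesaro mean (pointwise, or its \<open>L\<^sup>1\<close> norm) and choose
  a threshold \<open>\<epsilon>\<^sub>n\<close> decreasing to 0 so slowly that \<open>s\<^sub>n / \<epsilon>\<^sub>n \<rightarrow> 0\<close>. For
  \<open>A\<^sub>j = {f\<^sub>j > \<epsilon>\<^sub>j}\<close>, Markov's inequality and the monotonicity of \<open>\<epsilon>\<close> bound the density of
  \<open>{j < n. x \<in> A\<^sub>j}\<close> by \<open>s\<^sub>n / \<epsilon>\<^sub>n\<close>, while \<open>f\<^sub>n \<le> \<epsilon>\<^sub>n\<close> off \<open>A\<^sub>n\<close>.
  Backward directions: \<open>f\<^sub>j \<le> \<chi>\<^bsub>\<Omega> - A\<^sub>j\<^esub> f\<^sub>j + g \<chi>\<^bsub>A\<^sub>j\<^esub>\<close>, so the Cesaro mean of \<open>f\<close>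
  is at most the Cesaro mean of a null sequence plus \<open>g\<close> times the density of the \<open>A\<^sub>j\<close>.
  In \<open>L\<^sup>1\<close> the last term vanishes because the densities take values in \<open>[0, 1]\<close> and have
  integrals tending to 0, while \<open>g\<close> is integrable: truncate \<open>g\<close> at a large level.\<close>

section \<open>Cesaro means of real sequences\<close>

lemma cesaro_mean_tendsto_zero:
  fixes b :: "nat \<Rightarrow> real"
  assumes "b \<longlonglongrightarrow> 0"
  shows "(\<lambda>n. (\<Sum>j<n. b j) / real n) \<longlonglongrightarrow> 0"
proof (rule tendstoI)
  fix r :: real assume "0 < r"
  then obtain N where N: "\<And>j. N \<le> j \<Longrightarrow> \<bar>b j\<bar> < r / 2"
    using LIMSEQ_D[OF assms, of "r / 2"] by auto
  define C where "C = (\<Sum>j<N. \<bar>b j\<bar>)"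
  have "eventually (\<lambda>n. C / real n < r / 2) sequentially"
    using \<open>0 < r\<close> by (intro order_tendstoD(2)[OF lim_const_over_n]) simp
  with eventually_ge_at_top[of "max N 1"]
  show "eventually (\<lambda>n. dist ((\<Sum>j<n. b j) / real n) 0 < r) sequentially"
  proof eventually_elim
    case (elim n)
    then have "N \<le> n" "0 < real n" by auto
    have "\<bar>\<Sum>j<n. b j\<bar> \<le> (\<Sum>j<n. \<bar>b j\<bar>)"
      by (rule sum_abs)
    also have "\<dots> = C + (\<Sum>j\<in>{N..<n}. \<bar>b j\<bar>)"
      using \<open>N \<le> n\<close> unfolding C_def by (simp add: sum.atLeastLessThan_concat[of 0 N n, symmetric] lessThan_atLeast0)
    also have "(\<Sum>j\<in>{N..<n}. \<bar>b j\<bar>) \<le> (\<Sum>j\<in>{N..<n}. r / 2)"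
      using N by (intro sum_mono) (simp add: less_imp_le)
    also have "\<dots> \<le> real n * (r / 2)"
      using \<open>0 < r\<close> by simp
    finally have "\<bar>\<Sum>j<n. b j\<bar> / real n \<le> C / real n + r / 2"
      using \<open>0 < real n\<close> by (simp add: field_simps)
    then have "\<bar>\<Sum>j<n. b j\<bar> / real n < r"
      using elim by linarith
    then show ?case
      by simp
  qed
qed

lemma mean_count_exceeding_le:
  fixes a e :: "nat \<Rightarrow> real"
  assumes "\<And>j. 0 \<le> a j" and "\<And>j. j \<le> n \<Longrightarrow> e n \<le> e j" and "0 < e n"
  shows "(\<Sum>j<n. of_bool (e j < a j)) / real n \<le> ((\<Sum>j<n. a j) / real n) / e n"
proof -
  have "(\<Sum>j<n. of_bool (e j < a j)) \<le> (\<Sum>j<n. a j / e n)"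
  proof (rule sum_mono)
    fix j assume "j \<in> {..<n}"
    then have "e n \<le> e j" using assms(2) by simp
    then show "of_bool (e j < a j) \<le> a j / e n"
      using assms(1)[of j] assms(3) by (auto simp: field_simps)
  qed
  also have "\<dots> = (\<Sum>j<n. a j) / e n"
    by (rule sum_divide_distrib[symmetric])
  finally show ?thesis
    using divide_right_mono[of _ _ "real n"] by (metis divide_divide_eq_left mult.commute of_nat_0_le_iff)
qed

text \<open>The square root gives \<open>s n \<le> \<epsilon> n\<^sup>2\<close>, i.e. \<open>s n / \<epsilon> n \<le> \<epsilon> n\<close>, and the term \<open>1 / (n + 1)\<close>
  keeps \<open>\<epsilon>\<close> positive. Truncating at 1 makes the supremum meaningful for every \<open>s\<close>, which keeps
  \<open>\<epsilon>\<close> measurable when \<open>s\<close> depends measurably on a point.\<close>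

definition truncated_tail_sup :: "(nat \<Rightarrow> real) \<Rightarrow> nat \<Rightarrow> real" where
  "truncated_tail_sup s n = (SUP m\<in>{n..}. min (s m) 1)"

definition vanishing_threshold :: "(nat \<Rightarrow> real) \<Rightarrow> nat \<Rightarrow> real" where
  "vanishing_threshold s n = sqrt (truncated_tail_sup s n + 1 / (real n + 1))"

lemma bdd_above_truncated_tail: "bdd_above ((\<lambda>m. min (s m :: real) 1) ` {n..})"
  by (rule bdd_aboveI[of _ 1]) auto

lemma truncated_tail_sup_upper: "n \<le> m \<Longrightarrow> min (s m) 1 \<le> truncated_tail_sup s n"
  unfolding truncated_tail_sup_def by (rule cSUP_upper[OF _ bdd_above_truncated_tail]) simp

lemma truncated_tail_sup_nonneg: "(\<And>m. 0 \<le> s m) \<Longrightarrow> 0 \<le> truncated_tail_sup s n"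
  using truncated_tail_sup_upper[of n n s] by (metis min.bounded_iff order.trans order_refl zero_le_one)

lemma truncated_tail_sup_antimono: "n \<le> n' \<Longrightarrow> truncated_tail_sup s n' \<le> truncated_tail_sup s n"
  unfolding truncated_tail_sup_def
  by (rule cSUP_subset_mono) (auto simp: bdd_above_truncated_tail)

lemma truncated_tail_sup_tendsto_zero:
  assumes "\<And>m. 0 \<le> s m" and "s \<longlonglongrightarrow> 0"
  shows "truncated_tail_sup s \<longlonglongrightarrow> 0"
proof (rule tendstoI)
  fix r :: real assume "0 < r"
  then obtain N where N: "\<And>m. N \<le> m \<Longrightarrow> s m < r / 2"
    using LIMSEQ_D[OF assms(2), of "r / 2"] by force
  have "truncated_tail_sup s N \<le> r / 2"
    unfolding truncated_tail_sup_def by (rule cSUP_least) (auto dest: N)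
  then have "truncated_tail_sup s n < r" if "N \<le> n" for n
    using truncated_tail_sup_antimono[OF that, of s] \<open>0 < r\<close> by linarith
  then show "eventually (\<lambda>n. dist (truncated_tail_sup s n) 0 < r) sequentially"
    using truncated_tail_sup_nonneg[of s] assms(1) by (auto simp: eventually_sequentially)
qed

lemma vanishing_threshold_pos: "(\<And>m. 0 \<le> s m) \<Longrightarrow> 0 < vanishing_threshold s n"
  unfolding vanishing_threshold_def using truncated_tail_sup_nonneg[of s n]
  by (intro real_sqrt_gt_zero add_nonneg_pos) auto

lemma vanishing_threshold_antimono: "n \<le> n' \<Longrightarrow> vanishing_threshold s n' \<le> vanishing_threshold s n"
  unfolding vanishing_threshold_def using truncated_tail_sup_antimono[of n n' s]
  by (intro real_sqrt_le_mono add_mono) (auto simp: field_simps)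

lemma vanishing_threshold_tendsto_zero:
  assumes "\<And>m. 0 \<le> s m" and "s \<longlonglongrightarrow> 0"
  shows "vanishing_threshold s \<longlonglongrightarrow> 0"
proof -
  have "(\<lambda>n. 1 / (real n + 1)) \<longlonglongrightarrow> 0"
    using LIMSEQ_Suc[OF lim_inverse_n] by (simp add: inverse_eq_divide add.commute)
  then have "(\<lambda>n. sqrt (truncated_tail_sup s n + 1 / (real n + 1))) \<longlonglongrightarrow> sqrt (0 + 0)"
    by (intro tendsto_real_sqrt tendsto_add truncated_tail_sup_tendsto_zero assms)
  then show ?thesis
    unfolding vanishing_threshold_def by simp
qed

lemma vanishing_threshold_ratio_tendsto_zero:
  assumes "\<And>m. 0 \<le> s m" and "s \<longlonglongrightarrow> 0"
  shows "(\<lambda>n. s n / vanishing_threshold s n) \<longlonglongrightarrow> 0"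
proof (rule tendsto_sandwich[OF _ _ tendsto_const vanishing_threshold_tendsto_zero[OF assms]])
  show "eventually (\<lambda>n. 0 \<le> s n / vanishing_threshold s n) sequentially"
    using assms(1) vanishing_threshold_pos[of s] by (simp add: less_imp_le)
  show "eventually (\<lambda>n. s n / vanishing_threshold s n \<le> vanishing_threshold s n) sequentially"
    using order_tendstoD(2)[OF assms(2) zero_less_one]
  proof (rule eventually_mono)
    fix n assume "s n < 1"
    then have "s n \<le> truncated_tail_sup s n"
      using truncated_tail_sup_upper[of n n s] by simp
    moreover have "(vanishing_threshold s n)\<^sup>2 = truncated_tail_sup s n + 1 / (real n + 1)"
      unfolding vanishing_threshold_def using truncated_tail_sup_nonneg[of s n] assms(1) by simp
    moreover have "0 \<le> 1 / (real n + 1)"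
      by simp
    ultimately have "s n \<le> (vanishing_threshold s n)\<^sup>2"
      by linarith
    then show "s n / vanishing_threshold s n \<le> vanishing_threshold s n"
      using vanishing_threshold_pos[of s n] assms(1) by (simp add: field_simps power2_eq_square)
  qed
qed

lemma borel_measurable_vanishing_threshold[measurable]:
  assumes [measurable]: "\<And>n. (\<lambda>x. s x n) \<in> borel_measurable M"
  shows "(\<lambda>x. vanishing_threshold (s x) n) \<in> borel_measurable M"
  unfolding vanishing_threshold_def truncated_tail_sup_def
  by (measurable; auto intro: bdd_above_truncated_tail)

lemma mean_count_exceeding_threshold_tendsto_zero:
  fixes a :: "nat \<Rightarrow> real"
  assumes "\<And>j. 0 \<le> a j" and "(\<lambda>n. (\<Sum>j<n. a j) / real n) \<longlonglongrightarrow> 0"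
  defines "e \<equiv> vanishing_threshold (\<lambda>n. (\<Sum>j<n. a j) / real n)"
  shows "(\<lambda>n. (\<Sum>j<n. of_bool (e j < a j)) / real n) \<longlonglongrightarrow> 0"
proof -
  have mean_nonneg: "0 \<le> (\<Sum>j<n. a j) / real n" for n
    using assms(1) by (simp add: sum_nonneg)
  show ?thesis
  proof (rule tendsto_sandwich[OF _ _ tendsto_const])
    show "(\<lambda>n. ((\<Sum>j<n. a j) / real n) / e n) \<longlonglongrightarrow> 0"
      unfolding e_def by (rule vanishing_threshold_ratio_tendsto_zero[OF mean_nonneg assms(2)])
    show "eventually (\<lambda>n. (\<Sum>j<n. of_bool (e j < a j)) / real n \<le> ((\<Sum>j<n. a j) / real n) / e n)
      sequentially"
      unfolding e_def using mean_nonneg assms(1)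
      by (intro always_eventually allI mean_count_exceeding_le vanishing_threshold_pos vanishing_threshold_antimono)
    show "eventually (\<lambda>n. (0 :: real) \<le> (\<Sum>j<n. of_bool (e j < a j)) / real n) sequentially"
      by (simp add: sum_nonneg)
  qed
qed

lemma mean_le_split_mean:
  fixes a u :: "nat \<Rightarrow> real"
  assumes "\<And>j. 0 \<le> u j" and "\<And>j. a j \<le> G"
  shows "(\<Sum>j<n. a j) / real n \<le> (\<Sum>j<n. (1 - u j) * a j) / real n + G * ((\<Sum>j<n. u j) / real n)"
proof -
  have "(\<Sum>j<n. a j) \<le> (\<Sum>j<n. (1 - u j) * a j + G * u j)"
  proof (rule sum_mono)
    fix j
    have "u j * a j \<le> u j * G"
      using assms by (simp add: mult_left_mono)
    then show "a j \<le> (1 - u j) * a j + G * u j"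
      by (simp add: algebra_simps)
  qed
  also have "\<dots> = (\<Sum>j<n. (1 - u j) * a j) + G * (\<Sum>j<n. u j)"
    by (simp add: sum.distrib sum_distrib_left)
  finally have "(\<Sum>j<n. a j) / real n \<le> ((\<Sum>j<n. (1 - u j) * a j) + G * (\<Sum>j<n. u j)) / real n"
    by (rule divide_right_mono) simp
  then show ?thesis
    by (simp add: add_divide_distrib)
qed

lemma cesaro_zero_of_density_zero_split:
  fixes a u :: "nat \<Rightarrow> real"
  assumes "\<And>j. 0 \<le> a j" and "\<And>j. a j \<le> G" and "\<And>j. 0 \<le> u j"
    and "(\<lambda>n. (\<Sum>j<n. u j) / real n) \<longlonglongrightarrow> 0"
    and "(\<lambda>n. (1 - u n) * a n) \<longlonglongrightarrow> 0"
  shows "(\<lambda>n. (\<Sum>j<n. a j) / real n) \<longlonglongrightarrow> 0"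
proof (rule tendsto_sandwich[OF _ _ tendsto_const])
  show "eventually (\<lambda>n. 0 \<le> (\<Sum>j<n. a j) / real n) sequentially"
    using assms(1) by (simp add: sum_nonneg)
  show "eventually (\<lambda>n. (\<Sum>j<n. a j) / real n
      \<le> (\<Sum>j<n. (1 - u j) * a j) / real n + G * ((\<Sum>j<n. u j) / real n)) sequentially"
    using assms(2,3) by (intro always_eventually allI mean_le_split_mean)
  have "(\<lambda>n. (\<Sum>j<n. (1 - u j) * a j) / real n + G * ((\<Sum>j<n. u j) / real n)) \<longlonglongrightarrow> 0 + G * 0"
    by (intro tendsto_add tendsto_mult tendsto_const cesaro_mean_tendsto_zero assms(4,5))
  then show "(\<lambda>n. (\<Sum>j<n. (1 - u j) * a j) / real n + G * ((\<Sum>j<n. u j) / real n)) \<longlonglongrightarrow> 0"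
    by simp
qed

lemma mean_indicator_bounds:
  "0 \<le> (\<Sum>j<n. indicator (A j) x) / real n \<and> (\<Sum>j<n. indicator (A j) x) / real n \<le> (1::real)"
proof -
  have "(\<Sum>j<n. indicator (A j) x) \<le> (\<Sum>j<n. 1 :: real)"
    by (intro sum_mono) (simp add: indicator_def)
  then show ?thesis
    by (auto simp: sum_nonneg divide_le_eq)
qed

section \<open>Almost everywhere convergence\<close>

lemma AE_cesaro_zero_imp_density_zero_split:
  fixes f :: "nat \<Rightarrow> 'a \<Rightarrow> real"
  assumes [measurable]: "\<And>n. f n \<in> borel_measurable M"
    and "\<And>n. AE x in M. 0 \<le> f n x"
    and "AE x in M. (\<lambda>n. (\<Sum>j<n. f j x) / real n) \<longlonglongrightarrow> 0"
  shows "\<exists>A. (\<forall>n. A n \<in> sets M) \<and>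
    (AE x in M. (\<lambda>n. (\<Sum>j<n. indicator (A j) x) / real n) \<longlonglongrightarrow> (0::real)) \<and>
    (AE x in M. (\<lambda>n. indicator (space M - A n) x * f n x) \<longlonglongrightarrow> 0)"
proof -
  define e where "e j x = vanishing_threshold (\<lambda>n. (\<Sum>i<n. f i x) / real n) j" for j x
  define A where "A j = {x \<in> space M. e j x < f j x}" for j
  have A_sets: "A j \<in> sets M" for j
    unfolding A_def e_def by measurable
  have "AE x in M. \<forall>n. 0 \<le> f n x"
    using assms(2) by (simp add: AE_all_countable)
  moreover note assms(3) AE_space
  ultimately have "AE x in M. (\<lambda>n. (\<Sum>j<n. indicator (A j) x) / real n) \<longlonglongrightarrow> (0::real) \<and>
      (\<lambda>n. indicator (space M - A n) x * f n x) \<longlonglongrightarrow> 0"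
  proof eventually_elim
    case (elim x)
    have mean_nonneg: "0 \<le> (\<Sum>j<n. f j x) / real n" for n
      using elim(1) by (simp add: sum_nonneg)
    have indicator_A: "indicator (A j) x = (of_bool (e j x < f j x) :: real)" for j
      using elim(3) by (simp add: A_def indicator_def)
    have "(\<lambda>n. (\<Sum>j<n. indicator (A j) x) / real n) \<longlonglongrightarrow> (0::real)"
      unfolding indicator_A e_def
      using elim(1) by (intro mean_count_exceeding_threshold_tendsto_zero elim(2)) blast
    moreover have "(\<lambda>n. indicator (space M - A n) x * f n x) \<longlonglongrightarrow> 0"
    proof (rule tendsto_sandwich[OF _ _ tendsto_const])
      show "(\<lambda>n. e n x) \<longlonglongrightarrow> 0"
        unfolding e_def using mean_nonneg elim(2) by (rule vanishing_threshold_tendsto_zero)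
      show "eventually (\<lambda>n. 0 \<le> indicator (space M - A n) x * f n x) sequentially"
        using elim(1) by simp
      show "eventually (\<lambda>n. indicator (space M - A n) x * f n x \<le> e n x) sequentially"
        using vanishing_threshold_pos[OF mean_nonneg] elim(3)
        by (simp add: A_def e_def indicator_def less_imp_le)
    qed
    ultimately show ?case ..
  qed
  with A_sets show ?thesis
    by auto
qed

lemma AE_density_zero_split_imp_cesaro_zero:
  fixes f :: "nat \<Rightarrow> 'a \<Rightarrow> real" and g :: "'a \<Rightarrow> real"
  assumes "\<And>n. AE x in M. 0 \<le> f n x" and "\<And>n. AE x in M. f n x \<le> g x"
    and "AE x in M. (\<lambda>n. (\<Sum>j<n. indicator (A j) x) / real n) \<longlonglongrightarrow> (0::real)"
    and "AE x in M. (\<lambda>n. indicator (space M - A n) x * f n x) \<longlonglongrightarrow> 0"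
  shows "AE x in M. (\<lambda>n. (\<Sum>j<n. f j x) / real n) \<longlonglongrightarrow> 0"
proof -
  have "AE x in M. \<forall>n. 0 \<le> f n x" and "AE x in M. \<forall>n. f n x \<le> g x"
    using assms(1,2) by (simp_all add: AE_all_countable)
  from this assms(3,4) AE_space show ?thesis
  proof eventually_elim
    case (elim x)
    have "indicator (space M - A n) x = 1 - (indicator (A n) x :: real)" for n
      using elim(5) by (auto split: split_indicator)
    with elim(4) have "(\<lambda>n. (1 - indicator (A n) x) * f n x) \<longlonglongrightarrow> 0"
      by simp
    then show ?case
      using elim(1,2) by (intro cesaro_zero_of_density_zero_split[OF _ _ _ elim(3)]) auto
  qed
qed

lemma AE_cesaro_zero_iff_density_zero_split:
  fixes f :: "nat \<Rightarrow> 'a \<Rightarrow> real" and g :: "'a \<Rightarrow> real"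
  assumes "\<And>n. f n \<in> borel_measurable M"
    and "\<And>n. AE x in M. 0 \<le> f n x" and "\<And>n. AE x in M. f n x \<le> g x"
  shows "(AE x in M. (\<lambda>n. (\<Sum>j<n. f j x) / real n) \<longlonglongrightarrow> 0) \<longleftrightarrow>
    (\<exists>A. (\<forall>n. A n \<in> sets M) \<and>
      (AE x in M. (\<lambda>n. (\<Sum>j<n. indicator (A j) x) / real n) \<longlonglongrightarrow> (0::real)) \<and>
      (AE x in M. (\<lambda>n. indicator (space M - A n) x * f n x) \<longlonglongrightarrow> 0))"
    (is "?cesaro \<longleftrightarrow> (\<exists>A. ?split A)")
proof
  assume ?cesaro
  then show "\<exists>A. ?split A"
    by (rule AE_cesaro_zero_imp_density_zero_split[where f = f, OF assms(1,2)])
next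
  assume "\<exists>A. ?split A"
  then show ?cesaro
    using AE_density_zero_split_imp_cesaro_zero[where f = f and g = g, OF assms(2,3)] by blast
qed

section \<open>Convergence in \<open>L\<^sup>1\<close>\<close>

lemma tendsto_integral_excess_zero:
  fixes g :: "'a \<Rightarrow> real"
  assumes "integrable M g"
  shows "(\<lambda>k. \<integral>x. max (g x - real k) 0 \<partial>M) \<longlonglongrightarrow> 0"
proof -
  have [measurable]: "g \<in> borel_measurable M"
    using assms by simp
  have "(\<lambda>k. \<integral>x. max (g x - real k) 0 \<partial>M) \<longlonglongrightarrow> (\<integral>x. 0 \<partial>M)"
  proof (rule integral_dominated_convergence[where w = "\<lambda>x. \<bar>g x\<bar>"])
    show "AE x in M. (\<lambda>k. max (g x - real k) 0) \<longlonglongrightarrow> 0"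
    proof (rule AE_I2)
      fix x
      obtain k0 :: nat where "g x \<le> real k0"
        using real_arch_simple by blast
      then have "eventually (\<lambda>k. max (g x - real k) 0 = 0) sequentially"
        by (auto simp: eventually_sequentially intro!: exI[of _ k0])
      then show "(\<lambda>k. max (g x - real k) 0) \<longlonglongrightarrow> 0"
        by (rule tendsto_eventually)
    qed
  qed (use assms in auto)
  then show ?thesis
    by simp
qed

lemma tendsto_integral_abs_mult_zero:
  fixes g :: "'a \<Rightarrow> real" and d :: "nat \<Rightarrow> 'a \<Rightarrow> real"
  assumes g: "integrable M g"
    and d: "\<And>n. integrable M (d n)" "\<And>n. AE x in M. 0 \<le> d n x \<and> d n x \<le> 1"
    and lim: "(\<lambda>n. \<integral>x. d n x \<partial>M) \<longlonglongrightarrow> 0"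
  shows "(\<lambda>n. \<integral>x. \<bar>g x\<bar> * d n x \<partial>M) \<longlonglongrightarrow> 0"
proof (rule tendstoI)
  fix r :: real assume "0 < r"
  have [measurable]: "g \<in> borel_measurable M" "\<And>n. d n \<in> borel_measurable M"
    using g d by auto
  have g_abs: "integrable M (\<lambda>x. \<bar>g x\<bar>)"
    using g by simp
  obtain k :: nat where k: "(\<integral>x. max (\<bar>g x\<bar> - real k) 0 \<partial>M) < r / 2"
    using LIMSEQ_D[OF tendsto_integral_excess_zero[OF g_abs], of "r / 2"] \<open>0 < r\<close> by force
  have "(\<lambda>n. real k * (\<integral>x. d n x \<partial>M)) \<longlonglongrightarrow> real k * 0"
    by (intro tendsto_mult tendsto_const lim)
  then have "eventually (\<lambda>n. real k * (\<integral>x. d n x \<partial>M) < r / 2) sequentially"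
    using \<open>0 < r\<close> by (intro order_tendstoD(2)) auto
  then show "eventually (\<lambda>n. dist (\<integral>x. \<bar>g x\<bar> * d n x \<partial>M) 0 < r) sequentially"
  proof (rule eventually_mono)
    fix n assume small: "real k * (\<integral>x. d n x \<partial>M) < r / 2"
    have excess_int: "integrable M (\<lambda>x. max (\<bar>g x\<bar> - real k) 0)"
      by (rule Bochner_Integration.integrable_bound[OF g_abs]) auto
    have bound_int: "integrable M (\<lambda>x. max (\<bar>g x\<bar> - real k) 0 + real k * d n x)"
      using excess_int d(1) by simp
    have "AE x in M. \<bar>g x\<bar> * d n x \<le> max (\<bar>g x\<bar> - real k) 0 + real k * d n x"
      using d(2)[of n]
    proof eventually_elim
      case (elim x)
      then show ?case
        using mult_right_mono[of "d n x" 1 "\<bar>g x\<bar> - real k"]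
        by (cases "\<bar>g x\<bar> \<le> real k") (auto simp: algebra_simps mult_right_mono)
    qed
    moreover have "AE x in M. 0 \<le> max (\<bar>g x\<bar> - real k) 0 + real k * d n x"
      using d(2)[of n] by eventually_elim simp
    ultimately have "(\<integral>x. \<bar>g x\<bar> * d n x \<partial>M) \<le> (\<integral>x. max (\<bar>g x\<bar> - real k) 0 + real k * d n x \<partial>M)"
      by (rule Bochner_Integration.integral_mono_AE'[OF bound_int])
    also have "\<dots> = (\<integral>x. max (\<bar>g x\<bar> - real k) 0 \<partial>M) + real k * (\<integral>x. d n x \<partial>M)"
      using excess_int d(1) by simp
    finally have "(\<integral>x. \<bar>g x\<bar> * d n x \<partial>M) < r"
      using k small by linarith
    moreover have "AE x in M. 0 \<le> \<bar>g x\<bar> * d n x"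
      using d(2)[of n] by eventually_elim simp
    ultimately show "dist (\<integral>x. \<bar>g x\<bar> * d n x \<partial>M) 0 < r"
      using integral_nonneg_AE by fastforce
  qed
qed

lemma integral_mean_count_exceeding_le:
  fixes f :: "nat \<Rightarrow> 'a \<Rightarrow> real" and e :: "nat \<Rightarrow> real"
  assumes "\<And>n. integrable M (f n)" and "\<And>n. AE x in M. 0 \<le> f n x"
    and "\<And>j. j \<le> n \<Longrightarrow> e n \<le> e j" and "0 < e n"
  shows "(\<integral>x. \<bar>(\<Sum>j<n. indicator {y \<in> space M. e j < f j y} x) / real n\<bar> \<partial>M)
    \<le> (\<integral>x. \<bar>(\<Sum>j<n. f j x) / real n\<bar> \<partial>M) / e n"
proof -
  have "AE x in M. \<forall>n. 0 \<le> f n x"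
    using assms(2) by (simp add: AE_all_countable)
  then have "AE x in M. \<bar>(\<Sum>j<n. indicator {y \<in> space M. e j < f j y} x) / real n\<bar>
      \<le> \<bar>(\<Sum>j<n. f j x) / real n\<bar> / e n"
    using AE_space
  proof eventually_elim
    case (elim x)
    then have "indicator {y \<in> space M. e j < f j y} x = (of_bool (e j < f j x) :: real)" for j
      by (simp add: indicator_def)
    then have "\<bar>(\<Sum>j<n. indicator {y \<in> space M. e j < f j y} x) / real n\<bar>
        = (\<Sum>j<n. of_bool (e j < f j x)) / real n"
      by (simp add: sum_nonneg)
    also have "\<dots> \<le> ((\<Sum>j<n. f j x) / real n) / e n"
      using elim(1) assms(3,4) by (intro mean_count_exceeding_le) auto
    finally show ?case
      using elim(1) by (simp add: sum_nonneg)
  qed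
  then have "(\<integral>x. \<bar>(\<Sum>j<n. indicator {y \<in> space M. e j < f j y} x) / real n\<bar> \<partial>M)
      \<le> (\<integral>x. \<bar>(\<Sum>j<n. f j x) / real n\<bar> / e n \<partial>M)"
    using assms(1,4) by (intro Bochner_Integration.integral_mono_AE') auto
  then show ?thesis
    by simp
qed

lemma L1_cesaro_zero_imp_density_zero_split:
  fixes f :: "nat \<Rightarrow> 'a \<Rightarrow> real"
  assumes "finite_measure M" and "\<And>n. integrable M (f n)" and "\<And>n. AE x in M. 0 \<le> f n x"
    and lim: "(\<lambda>n. \<integral>x. \<bar>(\<Sum>j<n. f j x) / real n\<bar> \<partial>M) \<longlonglongrightarrow> 0"
  shows "\<exists>A. (\<forall>n. A n \<in> sets M) \<and>
    (\<lambda>n. \<integral>x. \<bar>(\<Sum>j<n. indicator (A j) x) / real n\<bar> \<partial>M) \<longlonglongrightarrow> (0::real) \<and>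
    (\<lambda>n. \<integral>x. \<bar>indicator (space M - A n) x * f n x\<bar> \<partial>M) \<longlonglongrightarrow> 0"
proof -
  interpret finite_measure M
    by (rule assms(1))
  have [measurable]: "f n \<in> borel_measurable M" for n
    using assms(2) by simp
  define S where "S n = (\<integral>x. \<bar>(\<Sum>j<n. f j x) / real n\<bar> \<partial>M)" for n
  define e where "e = vanishing_threshold S"
  define A where "A j = {x \<in> space M. e j < f j x}" for j
  have S_nonneg: "0 \<le> S n" for n
    unfolding S_def by simp
  have e_pos: "0 < e n" for n
    unfolding e_def using S_nonneg by (rule vanishing_threshold_pos)
  have "(\<lambda>n. \<integral>x. \<bar>(\<Sum>j<n. indicator (A j) x) / real n\<bar> \<partial>M) \<longlonglongrightarrow> (0::real)"
  proof (rule tendsto_sandwich[OF _ _ tendsto_const])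
    show "(\<lambda>n. S n / e n) \<longlonglongrightarrow> 0"
      unfolding e_def using S_nonneg lim unfolding S_def by (rule vanishing_threshold_ratio_tendsto_zero)
    have "(\<integral>x. \<bar>(\<Sum>j<n. indicator (A j) x) / real n\<bar> \<partial>M) \<le> S n / e n" for n
      unfolding A_def S_def
      by (rule integral_mean_count_exceeding_le[OF assms(2,3) _ e_pos])
        (simp add: e_def vanishing_threshold_antimono)
    then show "eventually (\<lambda>n. (\<integral>x. \<bar>(\<Sum>j<n. indicator (A j) x) / real n\<bar> \<partial>M) \<le> S n / e n)
      sequentially"
      by simp
    show "eventually (\<lambda>n. (0::real) \<le> \<integral>x. \<bar>(\<Sum>j<n. indicator (A j) x) / real n\<bar> \<partial>M) sequentially"
      by simp
  qed
  moreover have "(\<lambda>n. \<integral>x. \<bar>indicator (space M - A n) x * f n x\<bar> \<partial>M) \<longlonglongrightarrow> 0"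
  proof (rule tendsto_sandwich[OF _ _ tendsto_const])
    have "(\<lambda>n. e n * measure M (space M)) \<longlonglongrightarrow> 0 * measure M (space M)"
      unfolding e_def using S_nonneg lim unfolding S_def
      by (intro tendsto_mult tendsto_const vanishing_threshold_tendsto_zero)
    then show "(\<lambda>n. e n * measure M (space M)) \<longlonglongrightarrow> 0"
      by simp
    have "AE x in M. \<bar>indicator (space M - A n) x * f n x\<bar> \<le> e n" for n
      using assms(3)[of n] AE_space
      by eventually_elim (use e_pos[of n] in \<open>auto simp: A_def indicator_def\<close>)
    then have "(\<integral>x. \<bar>indicator (space M - A n) x * f n x\<bar> \<partial>M) \<le> e n * measure M (space M)" for n
      using e_pos[of n] integral_mono_AE'[of M "\<lambda>_. e n"] by (simp add: less_imp_le mult.commute)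
    then show "eventually (\<lambda>n. (\<integral>x. \<bar>indicator (space M - A n) x * f n x\<bar> \<partial>M)
      \<le> e n * measure M (space M)) sequentially"
      by simp
    show "eventually (\<lambda>n. 0 \<le> \<integral>x. \<bar>indicator (space M - A n) x * f n x\<bar> \<partial>M) sequentially"
      by simp
  qed
  moreover have "A j \<in> sets M" for j
    unfolding A_def by measurable
  ultimately show ?thesis
    by blast
qed

lemma integral_abs_mean_le_split:
  fixes f :: "nat \<Rightarrow> 'a \<Rightarrow> real" and g :: "'a \<Rightarrow> real"
  assumes "finite_measure M" and f_int: "\<And>n. integrable M (f n)"
    and "\<And>n. AE x in M. 0 \<le> f n x" and g_int: "integrable M g" and "\<And>n. AE x in M. f n x \<le> g x"
    and A_sets: "\<And>n. A n \<in> sets M"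
  defines "E j x \<equiv> \<bar>indicator (space M - A j) x * f j x\<bar>"
    and "d n x \<equiv> (\<Sum>j<n. indicator (A j) x) / real n"
  shows "(\<integral>x. \<bar>(\<Sum>j<n. f j x) / real n\<bar> \<partial>M)
    \<le> (\<Sum>j<n. \<integral>x. E j x \<partial>M) / real n + (\<integral>x. \<bar>g x\<bar> * d n x \<partial>M)"
proof -
  interpret finite_measure M
    by (rule assms(1))
  have [measurable]: "g \<in> borel_measurable M"
    using g_int by simp
  have E_int: "integrable M (E j)" for j
    unfolding E_def using f_int A_sets
    by (intro integrable_abs) (auto simp: mult.commute[of "indicator _ _"] intro: integrable_real_mult_indicator)
  have gd_int: "integrable M (\<lambda>x. \<bar>g x\<bar> * d n x)"
  proof (rule Bochner_Integration.integrable_bound[OF integrable_abs[OF g_int]])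
    show "(\<lambda>x. \<bar>g x\<bar> * d n x) \<in> borel_measurable M"
      unfolding d_def using A_sets by measurable
    have "0 \<le> d n x \<and> d n x \<le> 1" for x
      unfolding d_def by (rule mean_indicator_bounds)
    then show "AE x in M. norm (\<bar>g x\<bar> * d n x) \<le> norm \<bar>g x\<bar>"
      by (intro AE_I2) (simp add: abs_mult mult_left_le)
  qed
  have "AE x in M. \<forall>n. 0 \<le> f n x" and "AE x in M. \<forall>n. f n x \<le> g x"
    using assms(3,5) by (simp_all add: AE_all_countable)
  then have "AE x in M. \<bar>(\<Sum>j<n. f j x) / real n\<bar> \<le> (\<Sum>j<n. E j x) / real n + \<bar>g x\<bar> * d n x"
    using AE_space
  proof eventually_elim
    case (elim x)
    have "\<bar>(\<Sum>j<n. f j x) / real n\<bar> = (\<Sum>j<n. f j x) / real n"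
      using elim(1) by (simp add: sum_nonneg)
    also have "\<dots> \<le> (\<Sum>j<n. (1 - indicator (A j) x) * f j x) / real n + \<bar>g x\<bar> * d n x"
      unfolding d_def using elim(2) by (intro mean_le_split_mean) (auto intro: order_trans)
    also have "(\<Sum>j<n. (1 - indicator (A j) x) * f j x) = (\<Sum>j<n. E j x)"
      using elim(1,3) unfolding E_def by (intro sum.cong) (auto split: split_indicator)
    finally show ?case .
  qed
  moreover have "AE x in M. 0 \<le> (\<Sum>j<n. E j x) / real n + \<bar>g x\<bar> * d n x"
    unfolding E_def d_def by (simp add: sum_nonneg)
  ultimately have "(\<integral>x. \<bar>(\<Sum>j<n. f j x) / real n\<bar> \<partial>M)
      \<le> (\<integral>x. (\<Sum>j<n. E j x) / real n + \<bar>g x\<bar> * d n x \<partial>M)"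
    using E_int gd_int by (intro Bochner_Integration.integral_mono_AE') auto
  also have "\<dots> = (\<Sum>j<n. \<integral>x. E j x \<partial>M) / real n + (\<integral>x. \<bar>g x\<bar> * d n x \<partial>M)"
    using E_int gd_int by (simp add: Bochner_Integration.integral_sum)
  finally show ?thesis .
qed

lemma L1_density_zero_split_imp_cesaro_zero:
  fixes f :: "nat \<Rightarrow> 'a \<Rightarrow> real" and g :: "'a \<Rightarrow> real"
  assumes "finite_measure M" and "\<And>n. integrable M (f n)"
    and "\<And>n. AE x in M. 0 \<le> f n x" and "integrable M g" and "\<And>n. AE x in M. f n x \<le> g x"
    and "\<And>n. A n \<in> sets M"
    and density: "(\<lambda>n. \<integral>x. \<bar>(\<Sum>j<n. indicator (A j) x) / real n\<bar> \<partial>M) \<longlonglongrightarrow> (0::real)"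
    and outside: "(\<lambda>n. \<integral>x. \<bar>indicator (space M - A n) x * f n x\<bar> \<partial>M) \<longlonglongrightarrow> 0"
  shows "(\<lambda>n. \<integral>x. \<bar>(\<Sum>j<n. f j x) / real n\<bar> \<partial>M) \<longlonglongrightarrow> 0"
proof (rule tendsto_sandwich[OF _ _ tendsto_const])
  interpret finite_measure M
    by (rule assms(1))
  define d :: "nat \<Rightarrow> 'a \<Rightarrow> real" where "d n x = (\<Sum>j<n. indicator (A j) x) / real n" for n x
  have d_int: "integrable M (d n)" for n
    unfolding d_def using assms(6) by (auto simp: emeasure_real less_top[symmetric])
  have d_bounds: "0 \<le> d n x \<and> d n x \<le> 1" for n x
    unfolding d_def by (rule mean_indicator_bounds)
  then have "\<bar>d n x\<bar> = d n x" for n x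
    by simp
  then have "(\<lambda>n. \<integral>x. d n x \<partial>M) \<longlonglongrightarrow> 0"
    using density unfolding d_def[symmetric] by simp
  then have "(\<lambda>n. \<integral>x. \<bar>g x\<bar> * d n x \<partial>M) \<longlonglongrightarrow> 0"
    using d_bounds by (intro tendsto_integral_abs_mult_zero[OF assms(4) d_int]) simp_all
  with cesaro_mean_tendsto_zero[OF outside]
  show "(\<lambda>n. (\<Sum>j<n. \<integral>x. \<bar>indicator (space M - A j) x * f j x\<bar> \<partial>M) / real n
      + (\<integral>x. \<bar>g x\<bar> * d n x \<partial>M)) \<longlonglongrightarrow> 0"
    using tendsto_add by fastforce
  show "eventually (\<lambda>n. (\<integral>x. \<bar>(\<Sum>j<n. f j x) / real n\<bar> \<partial>M)
      \<le> (\<Sum>j<n. \<integral>x. \<bar>indicator (space M - A j) x * f j x\<bar> \<partial>M) / real n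
        + (\<integral>x. \<bar>g x\<bar> * d n x \<partial>M)) sequentially"
    unfolding d_def using integral_abs_mean_le_split[OF assms(1-6)] by simp
  show "eventually (\<lambda>n. 0 \<le> \<integral>x. \<bar>(\<Sum>j<n. f j x) / real n\<bar> \<partial>M) sequentially"
    by simp
qed

lemma L1_cesaro_zero_iff_density_zero_split:
  fixes f :: "nat \<Rightarrow> 'a \<Rightarrow> real" and g :: "'a \<Rightarrow> real"
  assumes "finite_measure M" and "\<And>n. integrable M (f n)"
    and "\<And>n. AE x in M. 0 \<le> f n x" and "integrable M g" and "\<And>n. AE x in M. f n x \<le> g x"
  shows "(\<lambda>n. \<integral>x. \<bar>(\<Sum>j<n. f j x) / real n\<bar> \<partial>M) \<longlonglongrightarrow> 0 \<longleftrightarrow>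
    (\<exists>A. (\<forall>n. A n \<in> sets M) \<and>
      (\<lambda>n. \<integral>x. \<bar>(\<Sum>j<n. indicator (A j) x) / real n\<bar> \<partial>M) \<longlonglongrightarrow> (0::real) \<and>
      (\<lambda>n. \<integral>x. \<bar>indicator (space M - A n) x * f n x\<bar> \<partial>M) \<longlonglongrightarrow> 0)"
    (is "?cesaro \<longleftrightarrow> (\<exists>A. ?split A)")
proof
  assume ?cesaro
  then show "\<exists>A. ?split A"
    by (rule L1_cesaro_zero_imp_density_zero_split[where f = f, OF assms(1-3)])
next
  assume "\<exists>A. ?split A"
  then show ?cesaro
    using L1_density_zero_split_imp_cesaro_zero[where f = f and g = g, OF assms] by blast
qed

theorem corollary5p1:
  fixes M :: "'a measure" and f :: "nat \<Rightarrow> 'a \<Rightarrow> real" and g :: "'a \<Rightarrow> real"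
  assumes "finite_measure M"
    and "\<And>n. integrable M (f n)"
    and "\<And>n. AE x in M. 0 \<le> f n x"
    and "integrable M g"
    and "\<And>n. AE x in M. f n x \<le> g x"
  shows
    "((AE x in M. (\<lambda>n. (\<Sum>j<n. f j x) / real n) \<longlonglongrightarrow> 0) \<longleftrightarrow>
      (\<exists>A :: nat \<Rightarrow> 'a set. (\<forall>n. A n \<in> sets M) \<and>
         (AE x in M. (\<lambda>n. (\<Sum>j<n. indicator (A j) x) / real n) \<longlonglongrightarrow> (0::real)) \<and>
         (AE x in M. (\<lambda>n. indicator (space M - A n) x * f n x) \<longlonglongrightarrow> 0)))
     \<and>
     ((\<lambda>n. \<integral>x. \<bar>(\<Sum>j<n. f j x) / real n\<bar> \<partial>M) \<longlonglongrightarrow> 0 \<longleftrightarrow>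
      (\<exists>A :: nat \<Rightarrow> 'a set. (\<forall>n. A n \<in> sets M) \<and>
         (\<lambda>n. \<integral>x. \<bar>(\<Sum>j<n. indicator (A j) x) / real n\<bar> \<partial>M) \<longlonglongrightarrow> (0::real) \<and>
         (\<lambda>n. \<integral>x. \<bar>indicator (space M - A n) x * f n x\<bar> \<partial>M) \<longlonglongrightarrow> 0))"
  using AE_cesaro_zero_iff_density_zero_split[where f = f and g = g,
      OF borel_measurable_integrable[OF assms(2)] assms(3,5)]
    L1_cesaro_zero_iff_density_zero_split[where f = f and g = g, OF assms]
  by (rule conjI)

end
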